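(* Assume the weight regularity condition and $\frac1N\sum_iw_i^4\to\mathbb E[W^4]<\infty$. Take $\beta=\beta_{c,N}={\rm asinh}(1/\nu_N)$ and $\lambda=3/4$ in the definition of $G_N$. Then for every $z,r\in\mathbb R$, \[ \lim_{N\to\infty}N\,G_N(z/N^{1/4};r)=-zr\sqrt{\frac{\mathbb E[W]}{\nu}}+\frac1{12}\frac{\mathbb E[W^4]}{\mathbb E[W^2]^2}z^4. \]
   Context: Weights $w_i>0$, $W_N=w_{U_N}$ with $U_N$ uniform on $[N]$. Weight regularity: $W_N\to W$ in distribution, $\mathbb E[W_N^2]\to\mathbb E[W^2]<\infty$, $\mathbb E[W]>0$. $\nu=\mathbb E[W^2]/\mathbb E[W]$, $\nu_N=\mathbb E[W_N^2]/\mathbb E[W_N]$. $\alpha_N(\beta)=\sqrt{\sinh(\beta)/\mathbb E[W_N]}$ and $G_N(z;r)=\frac12z^2-\frac1N\sum_{i\in[N]}\log\cosh\big(\alpha_N(\beta)w_iz+r/N^\lambda\big)$. *)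

theory Defs
  imports "HOL-Probability.Probability"
begin

text \<open>Triangular array of weights: w N i is the weight of vertex i in [N] = {1..N}.\<close>

definition emp_moment :: "(nat \<Rightarrow> nat \<Rightarrow> real) \<Rightarrow> nat \<Rightarrow> nat \<Rightarrow> real" where
  "emp_moment w N k = (1 / real N) * (\<Sum>i\<in>{1..N}. (w N i) ^ k)"

definition emp_law :: "(nat \<Rightarrow> nat \<Rightarrow> real) \<Rightarrow> nat \<Rightarrow> real measure" where
  "emp_law w N = distr (measure_pmf (pmf_of_set {1..N})) borel (w N)"

definition nu_N :: "(nat \<Rightarrow> nat \<Rightarrow> real) \<Rightarrow> nat \<Rightarrow> real" where
  "nu_N w N = emp_moment w N 2 / emp_moment w N 1"

definition alpha_N :: "(nat \<Rightarrow> nat \<Rightarrow> real) \<Rightarrow> nat \<Rightarrow> real \<Rightarrow> real" where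
  "alpha_N w N \<beta> = sqrt (sinh \<beta> / emp_moment w N 1)"

definition G_N :: "(nat \<Rightarrow> nat \<Rightarrow> real) \<Rightarrow> nat \<Rightarrow> real \<Rightarrow> real \<Rightarrow> real \<Rightarrow> real \<Rightarrow> real" where
  "G_N w N \<beta> lam z r = z\<^sup>2 / 2
     - (1 / real N) * (\<Sum>i\<in>{1..N}. ln (cosh (alpha_N w N \<beta> * w N i * z + r / real N powr lam)))"

definition beta_cN :: "(nat \<Rightarrow> nat \<Rightarrow> real) \<Rightarrow> nat \<Rightarrow> real" where
  "beta_cN w N = arsinh (1 / nu_N w N)"

end

theory Submission
  imports Defs
begin

text \<open>At \<open>\<beta> = \<beta>\<^sub>c\<^sub>,\<^sub>N\<close> one has \<open>\<alpha>\<^sub>N = 1 / sqrt m\<^sub>2\<close>, so with \<open>u = N powr (-1/4)\<close> and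
  \<open>a = 1 / sqrt m\<^sub>2\<close> the argument of \<open>ln cosh\<close> at vertex \<open>i\<close> is \<open>u * (a z w\<^sub>i + r u\<^sup>2)\<close>.
  Writing \<open>ln cosh x = x\<^sup>2/2 - x\<^sup>4/12 + R x\<close>, the quadratic part cancels the divergent
  \<open>z\<^sup>2 sqrt N / 2\<close> exactly and leaves \<open>-a z r m\<^sub>1 + O(u\<^sup>2)\<close>, while the quartic part tends to
  \<open>a\<^sup>4 z\<^sup>4 m\<^sub>4 / 12\<close>. Since \<open>0 \<le> R x \<le> x\<^sup>4 min 1 x\<^sup>2\<close>, the remainder is bounded by a multiple of
  the empirical mean of \<open>w\<^sup>4 min 1 (C w\<^sup>2 / sqrt N)\<close>, which vanishes because convergence of the
  fourth moments together with weak convergence makes \<open>w\<^sup>4\<close> uniformly integrable. The same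
  truncation argument yields \<open>m\<^sub>1 \<longlonglongrightarrow> E W\<close> from the convergent second moments.\<close>

section \<open>Taylor bounds for ln cosh\<close>

lemma tanh_le_self:
  assumes "0 \<le> x" shows "tanh x \<le> (x::real)"
proof -
  have "(\<lambda>x. x - tanh x) 0 \<le> (\<lambda>x. x - tanh x) x"
    by (rule deriv_nonneg_imp_mono[where g="\<lambda>x. x - tanh x" and g'="\<lambda>x. tanh x ^ 2"])
       (use assms in \<open>auto intro!: derivative_eq_intros simp: power2_eq_square\<close>)
  then show ?thesis by simp
qed

lemma tanh_ge_cubic:
  assumes "0 \<le> x" shows "x - x^3/3 \<le> tanh (x::real)"
proof -
  have "(\<lambda>x. tanh x - x + x^3/3) 0 \<le> (\<lambda>x. tanh x - x + x^3/3) x"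
  proof (rule deriv_nonneg_imp_mono[where g="\<lambda>x. tanh x - x + x^3/3" and g'="\<lambda>x. x^2 - tanh x ^ 2"])
    fix y :: real assume "y \<in> {0..x}"
    then show "0 \<le> y^2 - tanh y ^ 2" using tanh_le_self[of y] by (simp add: power_mono)
  qed (use assms in \<open>auto intro!: derivative_eq_intros simp: power2_eq_square\<close>)
  then show ?thesis by simp
qed

lemma tanh_le_quintic:
  assumes "0 \<le> x" shows "tanh x \<le> x - x^3/3 + 2*x^5/(15::real)"
proof -
  have "(\<lambda>x. x - x^3/3 + 2*x^5/15 - tanh x) 0 \<le> (\<lambda>x. x - x^3/3 + 2*x^5/15 - tanh x) x"
  proof (rule deriv_nonneg_imp_mono[where g="\<lambda>x. x - x^3/3 + 2*x^5/15 - tanh x" and g'="\<lambda>x. tanh x ^ 2 - x^2 + 2*x^4/3"])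
    fix y :: real assume "y \<in> {0..x}"
    then have y: "0 \<le> y" by simp
    show "0 \<le> tanh y ^ 2 - y^2 + 2*y^4/3"
    proof (cases "y^2 \<le> 3")
      case True
      then have "0 \<le> y - y^3/3"
        using y mult_left_mono[OF True y] by (simp add: power2_eq_square power3_eq_cube)
      then have "(y - y^3/3)^2 \<le> tanh y ^ 2" using tanh_ge_cubic[OF y] by (intro power_mono)
      moreover have "(y - y^3/3)^2 = y^2 - 2*y^4/3 + y^6/9" by (simp add: power2_eq_square field_simps power_numeral_reduce)
      moreover have "0 \<le> y^6" using y by simp
      ultimately show ?thesis by linarith
    next
      case False
      then have "y^2 * 1 \<le> y^2 * (2*y^2/3)" by (intro mult_left_mono) auto
      then have "y^2 \<le> 2*y^4/3" by (simp add: power4_eq_xxxx power2_eq_square)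
      then show ?thesis using zero_le_power2[of "tanh y"] by linarith
    qed
  qed (use assms in \<open>auto intro!: derivative_eq_intros simp: power2_eq_square\<close>)
  then show ?thesis by simp
qed

lemma ln_cosh_le_square:
  assumes "0 \<le> x" shows "ln (cosh x) \<le> x^2/(2::real)"
proof -
  have "(\<lambda>x. x^2/2 - ln (cosh x)) 0 \<le> (\<lambda>x. x^2/2 - ln (cosh x)) x"
    by (rule deriv_nonneg_imp_mono[where g="\<lambda>x. x^2/2 - ln (cosh x)" and g'="\<lambda>x. x - tanh x"])
       (use assms tanh_le_self in \<open>auto intro!: derivative_eq_intros simp: tanh_def\<close>)
  then show ?thesis by simp
qed

lemma ln_cosh_ge_quartic:
  assumes "0 \<le> x" shows "x^2/2 - x^4/12 \<le> ln (cosh (x::real))"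
proof -
  have "(\<lambda>x. ln (cosh x) - x^2/2 + x^4/12) 0 \<le> (\<lambda>x. ln (cosh x) - x^2/2 + x^4/12) x"
  proof (rule deriv_nonneg_imp_mono[where g="\<lambda>x. ln (cosh x) - x^2/2 + x^4/12" and g'="\<lambda>x. tanh x - x + x^3/3"])
    show "((\<lambda>x. ln (cosh x) - x^2/2 + x^4/12) has_real_derivative tanh y - y + y^3/3) (at y)" for y
      by (auto intro!: derivative_eq_intros simp: tanh_def)
    show "0 \<le> tanh y - y + y^3/3" if "y \<in> {0..x}" for y
      using tanh_ge_cubic[of y] that by simp
  qed (use assms in auto)
  then show ?thesis by simp
qed

lemma ln_cosh_le_sextic:
  assumes "0 \<le> x" shows "ln (cosh x) \<le> x^2/2 - x^4/12 + x^6/(45::real)"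
proof -
  have "(\<lambda>x. x^2/2 - x^4/12 + x^6/45 - ln (cosh x)) 0 \<le> (\<lambda>x. x^2/2 - x^4/12 + x^6/45 - ln (cosh x)) x"
    by (rule deriv_nonneg_imp_mono[where g="\<lambda>x. x^2/2 - x^4/12 + x^6/45 - ln (cosh x)"
          and g'="\<lambda>x. x - x^3/3 + 2*x^5/15 - tanh x"])
       (use assms tanh_le_quintic in \<open>auto intro!: derivative_eq_intros simp: tanh_def\<close>)
  then show ?thesis by simp
qed

definition ln_cosh_remainder :: "real \<Rightarrow> real" where
  "ln_cosh_remainder x = ln (cosh x) - x^2/2 + x^4/12"

lemma ln_cosh_remainder_abs: "ln_cosh_remainder \<bar>x\<bar> = ln_cosh_remainder x"
  by (simp add: ln_cosh_remainder_def power_even_abs_numeral)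

lemma ln_cosh_remainder_nonneg: "0 \<le> ln_cosh_remainder x"
  using ln_cosh_ge_quartic[of "\<bar>x\<bar>"] ln_cosh_remainder_abs[of x]
  by (simp add: ln_cosh_remainder_def)

lemma ln_cosh_remainder_le: "ln_cosh_remainder x \<le> x^4 * min 1 (x^2)"
proof (cases "x^2 \<le> 1")
  case True
  have "ln_cosh_remainder x \<le> x^6/45"
    using ln_cosh_le_sextic[of "\<bar>x\<bar>"] ln_cosh_remainder_abs[of x]
    by (simp add: ln_cosh_remainder_def power_even_abs_numeral)
  also have "\<dots> \<le> x^4 * x^2" by (simp add: power_add[symmetric])
  finally show ?thesis using True by simp
next
  case False
  have "ln_cosh_remainder x \<le> x^4/12"
    using ln_cosh_le_square[of "\<bar>x\<bar>"] ln_cosh_remainder_abs[of x]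
    by (simp add: ln_cosh_remainder_def)
  also have "\<dots> \<le> x^4" by simp
  finally show ?thesis using False by simp
qed

lemma power4_mult_min_mono:
  fixes y y' v :: real
  assumes "\<bar>y\<bar> \<le> \<bar>y'\<bar>" "0 \<le> v"
  shows "y^4 * min 1 (v * y^2) \<le> y'^4 * min 1 (v * y'^2)"
proof -
  have "y^2 \<le> y'^2" "y^4 \<le> y'^4"
    using power_mono[OF assms(1), of 2] power_mono[OF assms(1), of 4] by simp_all
  then show ?thesis using assms(2) by (intro mult_mono min.mono mult_left_mono) auto
qed

lemma ln_cosh_remainder_scaled_le:
  fixes u x c :: real
  shows "ln_cosh_remainder (u * (x + c)) \<le> 16 * u^4 * (x^4 * min 1 (4 * u^2 * x^2) + c^4)"
proof -
  define \<phi> where "\<phi> y = y^4 * min 1 (u^2 * y^2)" for y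
  have "\<phi> (x + c) \<le> \<phi> (2 * x) + \<phi> (2 * c)"
  proof -
    have "\<phi> (x + c) \<le> \<phi> (2 * x)" if "\<bar>c\<bar> \<le> \<bar>x\<bar>"
      unfolding \<phi>_def using that by (intro power4_mult_min_mono) auto
    moreover have "\<phi> (x + c) \<le> \<phi> (2 * c)" if "\<not> \<bar>c\<bar> \<le> \<bar>x\<bar>"
      unfolding \<phi>_def using that by (intro power4_mult_min_mono) auto
    moreover have "0 \<le> \<phi> (2 * x)" "0 \<le> \<phi> (2 * c)" by (simp_all add: \<phi>_def)
    ultimately show ?thesis by fastforce
  qed
  also have "\<dots> \<le> 16 * (x^4 * min 1 (4 * u^2 * x^2) + c^4)"
  proof -
    have "\<phi> (2 * c) \<le> (2 * c)^4"
      unfolding \<phi>_def by (rule mult_left_le) auto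
    moreover have "\<phi> (2 * x) = 16 * (x^4 * min 1 (4 * u^2 * x^2))"
      unfolding \<phi>_def by (simp add: power_mult_distrib ac_simps)
    ultimately show ?thesis by (simp add: power_mult_distrib)
  qed
  finally have "u^4 * \<phi> (x + c) \<le> u^4 * (16 * (x^4 * min 1 (4 * u^2 * x^2) + c^4))"
    by (rule mult_left_mono) simp
  moreover have "ln_cosh_remainder (u * (x + c)) \<le> u^4 * \<phi> (x + c)"
    using ln_cosh_remainder_le[of "u * (x + c)"] by (simp add: \<phi>_def power_mult_distrib)
  ultimately show ?thesis by (simp only: mult.assoc mult.left_commute[of 16])
qed

section \<open>Empirical averages\<close>

definition emp_avg :: "(nat \<Rightarrow> nat \<Rightarrow> real) \<Rightarrow> nat \<Rightarrow> (real \<Rightarrow> real) \<Rightarrow> real" where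
  "emp_avg w N f = (1 / real N) * (\<Sum>i\<in>{1..N}. f (w N i))"

lemma emp_moment_eq_emp_avg: "emp_moment w N k = emp_avg w N (\<lambda>x. x^k)"
  by (simp add: emp_moment_def emp_avg_def)

lemma emp_avg_mono: "(\<And>x. f x \<le> g x) \<Longrightarrow> emp_avg w N f \<le> emp_avg w N g"
  unfolding emp_avg_def by (intro mult_left_mono sum_mono) auto

lemma emp_avg_nonneg: "(\<And>x. 0 \<le> f x) \<Longrightarrow> 0 \<le> emp_avg w N f"
  unfolding emp_avg_def by (intro mult_nonneg_nonneg sum_nonneg) auto

lemma emp_avg_add: "emp_avg w N (\<lambda>x. f x + g x) = emp_avg w N f + emp_avg w N g"
  by (simp add: emp_avg_def sum.distrib distrib_left)

lemma emp_avg_diff: "emp_avg w N (\<lambda>x. f x - g x) = emp_avg w N f - emp_avg w N g"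
  by (simp add: emp_avg_def sum_subtractf right_diff_distrib)

lemma emp_avg_cmult: "emp_avg w N (\<lambda>x. c * f x) = c * emp_avg w N f"
  by (simp add: emp_avg_def sum_distrib_left)

lemma emp_avg_const: "N \<ge> 1 \<Longrightarrow> emp_avg w N (\<lambda>x. c) = c"
  by (simp add: emp_avg_def)

lemma emp_avg_abs_le: "\<bar>emp_avg w N f\<bar> \<le> emp_avg w N (\<lambda>x. \<bar>f x\<bar>)"
  unfolding emp_avg_def abs_mult by (intro mult_mono sum_abs) auto

lemma emp_avg_affine_power2:
  assumes "N \<ge> 1"
  shows "emp_avg w N (\<lambda>x. (b * x + c)^2) = b^2 * emp_moment w N 2 + 2 * b * c * emp_moment w N 1 + c^2"
proof -
  have "(\<lambda>x. (b * x + c)^2) = (\<lambda>x. b^2 * x^2 + (2 * b * c) * x^1 + c^2)"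
    by (auto simp: power2_eq_square algebra_simps)
  then show ?thesis
    using assms by (simp add: emp_avg_add emp_avg_cmult emp_avg_const emp_moment_eq_emp_avg)
qed

lemma emp_avg_affine_power4:
  assumes "N \<ge> 1"
  shows "emp_avg w N (\<lambda>x. (b * x + c)^4) = b^4 * emp_moment w N 4 + 4 * b^3 * c * emp_moment w N 3
    + 6 * b^2 * c^2 * emp_moment w N 2 + 4 * b * c^3 * emp_moment w N 1 + c^4"
proof -
  have "(\<lambda>x. (b * x + c)^4) = (\<lambda>x. b^4 * x^4 + (4 * b^3 * c) * x^3 + (6 * b^2 * c^2) * x^2
      + (4 * b * c^3) * x^1 + c^4)"
    by (auto simp: power_numeral_reduce algebra_simps)
  then show ?thesis
    using assms by (simp add: emp_avg_add emp_avg_cmult emp_avg_const emp_moment_eq_emp_avg)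
qed

lemma emp_moment_1_square_le: "(emp_moment w N 1)^2 \<le> emp_moment w N 2"
proof (cases "N \<ge> 1")
  case True
  have "0 \<le> emp_avg w N (\<lambda>x. (1 * x + - emp_moment w N 1)^2)"
    by (rule emp_avg_nonneg) simp
  also have "\<dots> = emp_moment w N 2 - (emp_moment w N 1)^2"
    by (simp only: emp_avg_affine_power2[OF True]) (simp add: power2_eq_square)
  finally show ?thesis by simp
qed (simp add: emp_moment_def)

lemma emp_moment_3_abs_le: "\<bar>emp_moment w N 3\<bar> \<le> emp_moment w N 2 + emp_moment w N 4"
proof -
  have cube_le: "\<bar>x^3\<bar> \<le> x^2 + x^4" for x :: real
  proof -
    have "x^2 + x^4 - \<bar>x^3\<bar> = \<bar>x\<bar>^2 * ((\<bar>x\<bar> - 1/2)^2 + 3/4)"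
      by (simp add: power_abs power2_eq_square power_numeral_reduce algebra_simps abs_mult flip: power_even_abs_numeral)
    moreover have "0 \<le> \<bar>x\<bar>^2 * ((\<bar>x\<bar> - 1/2)^2 + 3/4)" by simp
    ultimately show ?thesis by linarith
  qed
  have "\<bar>emp_moment w N 3\<bar> \<le> emp_avg w N (\<lambda>x. \<bar>x^3\<bar>)"
    unfolding emp_moment_eq_emp_avg by (rule emp_avg_abs_le)
  also have "\<dots> \<le> emp_avg w N (\<lambda>x. x^2 + x^4)"
    using cube_le by (rule emp_avg_mono)
  finally show ?thesis by (simp add: emp_avg_add emp_moment_eq_emp_avg)
qed

lemma emp_avg_affine_power4_tendsto:
  assumes b: "b \<longlonglongrightarrow> B" and c: "c \<longlonglongrightarrow> 0"
    and m1: "(\<lambda>N. emp_moment w N 1) \<longlonglongrightarrow> E1" and m2: "(\<lambda>N. emp_moment w N 2) \<longlonglongrightarrow> E2"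
    and m4: "(\<lambda>N. emp_moment w N 4) \<longlonglongrightarrow> E4"
  shows "(\<lambda>N. emp_avg w N (\<lambda>x. (b N * x + c N)^4)) \<longlonglongrightarrow> B^4 * E4"
proof (rule Lim_transform_eventually)
  have "(\<lambda>N. c N * emp_moment w N 3) \<longlonglongrightarrow> 0"
  proof (rule Lim_null_comparison)
    show "\<forall>\<^sub>F N in sequentially. norm (c N * emp_moment w N 3) \<le> \<bar>c N\<bar> * (emp_moment w N 2 + emp_moment w N 4)"
      by (intro always_eventually allI) (simp add: abs_mult mult_left_mono emp_moment_3_abs_le)
    show "(\<lambda>N. \<bar>c N\<bar> * (emp_moment w N 2 + emp_moment w N 4)) \<longlonglongrightarrow> 0"
      using tendsto_mult[OF tendsto_rabs[OF c] tendsto_add[OF m2 m4]] by simp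
  qed
  then have "(\<lambda>N. b N^4 * emp_moment w N 4 + 4 * b N^3 * (c N * emp_moment w N 3)
      + 6 * b N^2 * c N^2 * emp_moment w N 2 + 4 * b N * c N^3 * emp_moment w N 1 + c N^4)
      \<longlonglongrightarrow> B^4 * E4 + 4 * B^3 * 0 + 6 * B^2 * 0^2 * E2 + 4 * B * 0^3 * E1 + 0^4"
    by (intro tendsto_intros b c m1 m2 m4)
  then show "(\<lambda>N. b N^4 * emp_moment w N 4 + 4 * b N^3 * (c N * emp_moment w N 3)
      + 6 * b N^2 * c N^2 * emp_moment w N 2 + 4 * b N * c N^3 * emp_moment w N 1 + c N^4)
      \<longlonglongrightarrow> B^4 * E4"
    by simp
  show "\<forall>\<^sub>F N in sequentially. b N^4 * emp_moment w N 4 + 4 * b N^3 * (c N * emp_moment w N 3)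
      + 6 * b N^2 * c N^2 * emp_moment w N 2 + 4 * b N * c N^3 * emp_moment w N 1 + c N^4
      = emp_avg w N (\<lambda>x. (b N * x + c N)^4)"
    by (intro eventually_sequentiallyI[of 1]) (simp add: emp_avg_affine_power4 mult.assoc)
qed

section \<open>Weak convergence and truncation\<close>

lemma real_distribution_emp_law: "real_distribution (emp_law w N)"
  unfolding emp_law_def real_distribution_def real_distribution_axioms_def
  by (auto intro!: measure_pmf.prob_space_distr)

lemma integral_emp_law:
  assumes "N \<ge> 1" "f \<in> borel_measurable borel"
  shows "integral\<^sup>L (emp_law w N) f = emp_avg w N f"
proof -
  have "integral\<^sup>L (emp_law w N) f = integral\<^sup>L (measure_pmf (pmf_of_set {1..N})) (\<lambda>i. f (w N i))"
    unfolding emp_law_def using assms(2) by (subst integral_distr) auto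
  also have "\<dots> = emp_avg w N f"
    using assms(1) by (subst integral_pmf_of_set) (auto simp: emp_avg_def)
  finally show ?thesis .
qed

lemma emp_avg_tendsto_integral:
  assumes "real_distribution \<mu>" "weak_conv_m (emp_law w) \<mu>"
    and "\<And>x. isCont f x" "\<And>x. \<bar>f x\<bar> \<le> B"
  shows "(\<lambda>N. emp_avg w N f) \<longlonglongrightarrow> integral\<^sup>L \<mu> f"
proof (rule Lim_transform_eventually)
  show "(\<lambda>N. integral\<^sup>L (emp_law w N) f) \<longlonglongrightarrow> integral\<^sup>L \<mu> f"
    using weak_conv_imp_integral_bdd_continuous_conv[OF real_distribution_emp_law assms(1,2), of f B] assms(3,4)
    by auto
  have "f \<in> borel_measurable borel"
    using assms(3) by (intro borel_measurable_continuous_onI continuous_at_imp_continuous_on) auto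
  then show "\<forall>\<^sub>F N in sequentially. integral\<^sup>L (emp_law w N) f = emp_avg w N f"
    by (intro eventually_sequentiallyI[of 1] integral_emp_law)
qed

lemma tendsto_of_approximations:
  fixes a :: "nat \<Rightarrow> real" and b e :: "nat \<Rightarrow> nat \<Rightarrow> real"
  assumes approx: "\<And>K. \<forall>\<^sub>F N in sequentially. \<bar>a N - b K N\<bar> \<le> e K N"
    and b: "\<And>K. b K \<longlonglongrightarrow> B K" and e: "\<And>K. e K \<longlonglongrightarrow> E K"
    and B: "B \<longlonglongrightarrow> L" and E: "E \<longlonglongrightarrow> 0"
  shows "a \<longlonglongrightarrow> L"
proof (rule tendstoI)
  fix \<epsilon> :: real assume "0 < \<epsilon>"
  then have "\<forall>\<^sub>F K in sequentially. dist (B K) L < \<epsilon>/4 \<and> dist (E K) 0 < \<epsilon>/4"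
    using B E by (intro eventually_conj tendstoD) auto
  then obtain K where K: "dist (B K) L < \<epsilon>/4" "dist (E K) 0 < \<epsilon>/4"
    by (auto simp: eventually_sequentially)
  have "\<forall>\<^sub>F N in sequentially. dist (b K N) (B K) < \<epsilon>/4 \<and> dist (e K N) (E K) < \<epsilon>/4"
    using b e \<open>0 < \<epsilon>\<close> by (intro eventually_conj tendstoD) auto
  with approx[of K] show "\<forall>\<^sub>F N in sequentially. dist (a N) L < \<epsilon>"
  proof eventually_elim
    case (elim N)
    then show ?case using K unfolding dist_real_def by linarith
  qed
qed

lemma real_distribution_continuous_measurable:
  assumes "real_distribution \<mu>" "\<And>x. isCont f x"
  shows "f \<in> borel_measurable \<mu>"
proof -
  have "sets \<mu> = sets borel" using assms(1) by (simp add: real_distribution_def real_distribution_axioms_def)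
  then have "borel_measurable \<mu> = borel_measurable borel" by (rule measurable_cong_sets) simp
  then show ?thesis
    using assms(2) by (auto intro: borel_measurable_continuous_onI continuous_at_imp_continuous_on)
qed

definition clip :: "real \<Rightarrow> real \<Rightarrow> real" where
  "clip c x = max (- c) (min x c)"

lemma isCont_clip: "isCont (clip c) x"
  unfolding clip_def by (intro continuous_intros)

lemma abs_clip_le_bound: "0 \<le> c \<Longrightarrow> \<bar>clip c x\<bar> \<le> c"
  unfolding clip_def by linarith

lemma abs_clip_le: "0 \<le> c \<Longrightarrow> \<bar>clip c x\<bar> \<le> \<bar>x\<bar>"
  unfolding clip_def by linarith

lemma abs_diff_clip_le:
  assumes "0 < c" shows "\<bar>x - clip c x\<bar> \<le> x^2 / c"
proof (cases "\<bar>x\<bar> \<le> c")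
  case False
  then have "\<bar>x\<bar> * c \<le> \<bar>x\<bar> * \<bar>x\<bar>" by (intro mult_left_mono) auto
  then have "\<bar>x\<bar> \<le> x^2 / c" using assms by (simp add: pos_le_divide_eq power2_eq_square)
  then show ?thesis using False assms unfolding clip_def by linarith
next
  case True
  then have "clip c x = x" unfolding clip_def by linarith
  then show ?thesis using assms by simp
qed

lemma integral_clip_tendsto:
  assumes law: "real_distribution \<mu>" and int1: "integrable \<mu> (\<lambda>x. x)"
  shows "(\<lambda>K. \<integral>x. clip (real K + 1) x \<partial>\<mu>) \<longlonglongrightarrow> (\<integral>x. x \<partial>\<mu>)"
proof (rule integral_dominated_convergence[where w="\<lambda>x. \<bar>x\<bar>"])
  show "AE x in \<mu>. (\<lambda>K. clip (real K + 1) x) \<longlonglongrightarrow> x"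
  proof (intro AE_I2 tendsto_eventually eventually_sequentiallyI)
    show "clip (real K + 1) x = x" if "nat \<lceil>\<bar>x\<bar>\<rceil> \<le> K" for x K
      using that unfolding clip_def by linarith
  qed
  show "AE x in \<mu>. norm (clip (real K + 1) x) \<le> \<bar>x\<bar>" for K
    by (simp add: abs_clip_le)
  show "(\<lambda>x. x) \<in> borel_measurable \<mu>" "clip (real K + 1) \<in> borel_measurable \<mu>" for K
    by (auto intro!: real_distribution_continuous_measurable[OF law] isCont_clip)
  show "integrable \<mu> (\<lambda>x. \<bar>x\<bar>)"
    using int1 by (rule integrable_abs)
qed

lemma emp_moment_1_tendsto:
  assumes law: "real_distribution \<mu>" and conv: "weak_conv_m (emp_law w) \<mu>"
    and int1: "integrable \<mu> (\<lambda>x. x)" and mom2: "(\<lambda>N. emp_moment w N 2) \<longlonglongrightarrow> E2"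
  shows "(\<lambda>N. emp_moment w N 1) \<longlonglongrightarrow> (\<integral>x. x \<partial>\<mu>)"
proof -
  have err_lim: "(\<lambda>K. E2 / (real K + 1)) \<longlonglongrightarrow> 0"
    using LIMSEQ_Suc[OF lim_const_over_n[of E2]] by (simp add: add.commute)
  show ?thesis
  proof (rule tendsto_of_approximations[where b="\<lambda>K N. emp_avg w N (clip (real K + 1))"
        and e="\<lambda>K N. emp_moment w N 2 / (real K + 1)", OF _ _ _ integral_clip_tendsto[OF law int1] err_lim])
    fix K
    show "\<forall>\<^sub>F N in sequentially.
        \<bar>emp_moment w N 1 - emp_avg w N (clip (real K + 1))\<bar> \<le> emp_moment w N 2 / (real K + 1)"
    proof (intro always_eventually allI)
      fix N
      have "\<bar>emp_moment w N 1 - emp_avg w N (clip (real K + 1))\<bar>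
          \<le> emp_avg w N (\<lambda>x. \<bar>x - clip (real K + 1) x\<bar>)"
        unfolding emp_moment_eq_emp_avg emp_avg_diff[symmetric] power_one_right by (rule emp_avg_abs_le)
      also have "\<dots> \<le> emp_avg w N (\<lambda>x. 1 / (real K + 1) * x^2)"
        using abs_diff_clip_le[of "real K + 1"] by (intro emp_avg_mono) simp
      also have "\<dots> = emp_moment w N 2 / (real K + 1)"
        by (simp only: emp_avg_cmult emp_moment_eq_emp_avg) simp
      finally show "\<bar>emp_moment w N 1 - emp_avg w N (clip (real K + 1))\<bar> \<le> emp_moment w N 2 / (real K + 1)" .
    qed
    show "(\<lambda>N. emp_avg w N (clip (real K + 1))) \<longlonglongrightarrow> (\<integral>x. clip (real K + 1) x \<partial>\<mu>)"
      by (rule emp_avg_tendsto_integral[OF law conv isCont_clip abs_clip_le_bound]) simp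
    show "(\<lambda>N. emp_moment w N 2 / (real K + 1)) \<longlonglongrightarrow> E2 / (real K + 1)"
      by (intro tendsto_divide mom2 tendsto_const) simp
  qed
qed

lemma power4_mult_min_le_truncation:
  fixes t K x :: real
  assumes t: "0 \<le> t" and K: "0 \<le> K"
  shows "x^4 * min 1 (t * x^2) \<le> t * K * x^4 + 2 * (x^4 - min (x^4) (K^2 / 2))"
proof (cases "x^2 \<le> K")
  case True
  have "x^4 * min 1 (t * x^2) \<le> x^4 * (t * K)"
    using True t by (intro mult_left_mono) (auto intro: min.coboundedI2 mult_left_mono)
  then show ?thesis by (simp add: algebra_simps)
next
  case False
  then have "K^2 \<le> (x^2)^2" using K by (intro power_mono) auto
  then have "x^4 \<le> 2 * (x^4 - min (x^4) (K^2 / 2))" by (simp flip: power_mult)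
  moreover have "x^4 * min 1 (t * x^2) \<le> x^4" by (rule mult_left_le) (auto simp: t)
  moreover have "0 \<le> t * K * x^4" using t K by simp
  ultimately show ?thesis by linarith
qed

lemma integral_min_power4_tendsto:
  assumes law: "real_distribution \<mu>" and int4: "integrable \<mu> (\<lambda>x. x^4)"
  shows "(\<lambda>K. \<integral>x. min (x^4) ((real K)^2 / 2) \<partial>\<mu>) \<longlonglongrightarrow> (\<integral>x. x^4 \<partial>\<mu>)"
proof (rule integral_dominated_convergence[where w="\<lambda>x. x^4"])
  show "AE x in \<mu>. (\<lambda>K. min (x^4) ((real K)^2 / 2)) \<longlonglongrightarrow> x^4"
  proof (intro AE_I2 tendsto_eventually eventually_sequentiallyI)
    show "min (x^4) ((real K)^2 / 2) = x^4" if "nat \<lceil>2 * x^4\<rceil> + 1 \<le> K" for x K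
    proof -
      from that have "2 * x^4 \<le> real K" "1 \<le> real K" by linarith+
      moreover have "real K * 1 \<le> real K * real K" using \<open>1 \<le> real K\<close> by (intro mult_left_mono) auto
      ultimately have "x^4 \<le> (real K)^2 / 2" unfolding power2_eq_square by linarith
      then show ?thesis by simp
    qed
  qed
  show "AE x in \<mu>. norm (min (x^4) ((real K)^2 / 2)) \<le> x^4" for K
    by simp
  show "(\<lambda>x. x^4) \<in> borel_measurable \<mu>" "(\<lambda>x. min (x^4) ((real K)^2 / 2)) \<in> borel_measurable \<mu>" for K
    by (auto intro!: real_distribution_continuous_measurable[OF law] continuous_intros)
qed (rule int4)

lemma emp_avg_quartic_tail_tendsto_0:
  assumes law: "real_distribution \<mu>" and conv: "weak_conv_m (emp_law w) \<mu>"
    and int4: "integrable \<mu> (\<lambda>x. x^4)" and mom4: "(\<lambda>N. emp_moment w N 4) \<longlonglongrightarrow> (\<integral>x. x^4 \<partial>\<mu>)"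
    and s: "s \<longlonglongrightarrow> 0" "\<And>N. 0 \<le> s N"
  shows "(\<lambda>N. emp_avg w N (\<lambda>x. x^4 * min 1 (s N * x^2))) \<longlonglongrightarrow> 0"
proof -
  define trunc where "trunc K x = min (x^4) ((real K)^2 / 2)" for K x
  have err_lim: "(\<lambda>K. 2 * ((\<integral>x. x^4 \<partial>\<mu>) - (\<integral>x. trunc K x \<partial>\<mu>))) \<longlonglongrightarrow> 0"
    using tendsto_mult_left[OF tendsto_diff[OF tendsto_const integral_min_power4_tendsto[OF law int4]],
        of 2 "\<integral>x. x^4 \<partial>\<mu>"]
    by (simp add: trunc_def)
  show ?thesis
  proof (rule tendsto_of_approximations[where b="\<lambda>K N. 0"
        and e="\<lambda>K N. s N * real K * emp_moment w N 4 + 2 * (emp_moment w N 4 - emp_avg w N (trunc K))",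
        OF _ _ _ tendsto_const err_lim])
    fix K
    show "\<forall>\<^sub>F N in sequentially. \<bar>emp_avg w N (\<lambda>x. x^4 * min 1 (s N * x^2)) - 0\<bar>
        \<le> s N * real K * emp_moment w N 4 + 2 * (emp_moment w N 4 - emp_avg w N (trunc K))"
    proof (intro always_eventually allI)
      fix N
      have "0 \<le> emp_avg w N (\<lambda>x. x^4 * min 1 (s N * x^2))"
        using s(2) by (intro emp_avg_nonneg) simp
      moreover have "emp_avg w N (\<lambda>x. x^4 * min 1 (s N * x^2))
          \<le> emp_avg w N (\<lambda>x. (s N * real K) * x^4 + 2 * (x^4 - trunc K x))"
        using power4_mult_min_le_truncation[OF s(2), of "real K"]
        by (intro emp_avg_mono) (simp add: trunc_def mult.assoc)
      ultimately show "\<bar>emp_avg w N (\<lambda>x. x^4 * min 1 (s N * x^2)) - 0\<bar>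
          \<le> s N * real K * emp_moment w N 4 + 2 * (emp_moment w N 4 - emp_avg w N (trunc K))"
        by (simp only: emp_avg_add emp_avg_cmult emp_avg_diff emp_moment_eq_emp_avg diff_zero abs_of_nonneg)
    qed
    have "(\<lambda>N. emp_avg w N (trunc K)) \<longlonglongrightarrow> (\<integral>x. trunc K x \<partial>\<mu>)"
      unfolding trunc_def by (rule emp_avg_tendsto_integral[OF law conv, of _ "(real K)^2 / 2"])
        (auto intro!: continuous_intros)
    then show "(\<lambda>N. s N * real K * emp_moment w N 4 + 2 * (emp_moment w N 4 - emp_avg w N (trunc K)))
        \<longlonglongrightarrow> 2 * ((\<integral>x. x^4 \<partial>\<mu>) - (\<integral>x. trunc K x \<partial>\<mu>))"
      by (auto intro!: tendsto_eq_intros s mom4)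
  qed (rule tendsto_const)
qed

section \<open>The rescaled free energy at criticality\<close>

lemma alpha_N_beta_cN:
  assumes "emp_moment w N 1 \<noteq> 0"
  shows "alpha_N w N (beta_cN w N) = 1 / sqrt (emp_moment w N 2)"
  using assms by (simp add: alpha_N_def beta_cN_def nu_N_def real_sqrt_divide)

lemma scaled_G_N_beta_cN_expansion:
  assumes N: "N \<ge> 1" and m1: "emp_moment w N 1 \<noteq> 0" and m2: "emp_moment w N 2 > 0"
  defines "u \<equiv> 1 / real N powr (1/4)" and "a \<equiv> 1 / sqrt (emp_moment w N 2)"
  shows "real N * G_N w N (beta_cN w N) (3/4) (z / real N powr (1/4)) r
    = - (a * z * r * emp_moment w N 1) - r^2 * u^2 / 2 + emp_avg w N (\<lambda>x. (a * z * x + r * u^2)^4) / 12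
      - emp_avg w N (\<lambda>x. ln_cosh_remainder (u * (a * z * x + r * u^2))) / u^4"
proof -
  define y where "y x = a * z * x + r * u^2" for x
  define R where "R = emp_avg w N (\<lambda>x. ln_cosh_remainder (u * y x))"
  have q: "real N powr (1/4) > 0" using N by simp
  then have u: "u > 0" by (simp add: u_def)
  have N_u: "real N = 1 / u^4"
    using N by (simp add: u_def power_divide) (subst powr_power; simp)
  have arg: "alpha_N w N (beta_cN w N) * w N i * (z / real N powr (1/4)) + r / real N powr (3/4) = u * y (w N i)" for i
  proof -
    have "real N powr (3/4) = (real N powr (1/4))^3" using N by (subst powr_power) simp_all
    then show ?thesis
      using m1 m2 q by (simp add: alpha_N_beta_cN y_def u_def a_def field_simps power2_eq_square power3_eq_cube)
  qed
  have a2: "a^2 * emp_moment w N 2 = 1" using m2 by (simp add: a_def power_divide)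
  have sq: "emp_avg w N (\<lambda>x. y x ^ 2) = z^2 + 2 * a * z * r * u^2 * emp_moment w N 1 + r^2 * u^4"
    using emp_avg_affine_power2[OF N, where b="a * z" and c="r * u^2"] a2
    by (simp add: y_def algebra_simps flip: power_mult)
  have "emp_avg w N (\<lambda>x. ln (cosh (u * y x)))
      = emp_avg w N (\<lambda>x. u^2 / 2 * y x ^ 2 - u^4 / 12 * y x ^ 4 + ln_cosh_remainder (u * y x))"
    by (simp add: ln_cosh_remainder_def power_mult_distrib)
  also have "\<dots> = u^2 / 2 * emp_avg w N (\<lambda>x. y x ^ 2) - u^4 / 12 * emp_avg w N (\<lambda>x. y x ^ 4) + R"
    by (simp only: emp_avg_add emp_avg_diff emp_avg_cmult R_def)
  finally have avg: "emp_avg w N (\<lambda>x. ln (cosh (u * y x))) = \<dots>" .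
  have "real N * G_N w N (beta_cN w N) (3/4) (z / real N powr (1/4)) r
      = real N * ((z * u)^2 / 2 - emp_avg w N (\<lambda>x. ln (cosh (u * y x))))"
    unfolding G_N_def arg emp_avg_def by (simp add: u_def)
  also have "\<dots> = - (a * z * r * emp_moment w N 1) - r^2 * u^2 / 2 + emp_avg w N (\<lambda>x. y x ^ 4) / 12 - R / u^4"
    unfolding avg sq N_u using u by (simp add: field_simps power2_eq_square power4_eq_xxxx)
  finally show ?thesis by (simp add: y_def R_def)
qed

lemma emp_avg_ln_cosh_remainder_tendsto_0:
  assumes law: "real_distribution \<mu>" and conv: "weak_conv_m (emp_law w) \<mu>"
    and int4: "integrable \<mu> (\<lambda>x. x^4)" and mom4: "(\<lambda>N. emp_moment w N 4) \<longlonglongrightarrow> (\<integral>x. x^4 \<partial>\<mu>)"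
    and u: "u \<longlonglongrightarrow> 0" and b: "b \<longlonglongrightarrow> B" and c: "c \<longlonglongrightarrow> 0"
  shows "(\<lambda>N. emp_avg w N (\<lambda>x. ln_cosh_remainder (u N * (b N * x + c N))) / u N ^ 4) \<longlonglongrightarrow> 0"
proof (rule Lim_null_comparison)
  define s where "s N = 4 * u N ^ 2 * b N ^ 2" for N
  define T where "T N = emp_avg w N (\<lambda>x. x^4 * min 1 (s N * x^2))" for N
  have "(\<lambda>N. 16 * (b N ^ 4 * T N + c N ^ 4)) \<longlonglongrightarrow> 16 * (B ^ 4 * 0 + 0 ^ 4)"
  proof (intro tendsto_intros b c)
    show "T \<longlonglongrightarrow> 0" unfolding T_def
    proof (rule emp_avg_quartic_tail_tendsto_0[OF law conv int4 mom4])
      have "s \<longlonglongrightarrow> 4 * 0^2 * B^2" unfolding s_def by (intro tendsto_intros u b)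
      then show "s \<longlonglongrightarrow> 0" by simp
    qed (simp add: s_def)
  qed
  then show "(\<lambda>N. 16 * (b N ^ 4 * T N + c N ^ 4)) \<longlonglongrightarrow> 0" by simp
  show "\<forall>\<^sub>F N in sequentially. norm (emp_avg w N (\<lambda>x. ln_cosh_remainder (u N * (b N * x + c N))) / u N ^ 4)
      \<le> 16 * (b N ^ 4 * T N + c N ^ 4)"
  proof (intro eventually_sequentiallyI[of 1])
    fix N :: nat assume N: "N \<ge> 1"
    let ?R = "emp_avg w N (\<lambda>x. ln_cosh_remainder (u N * (b N * x + c N)))"
    have "?R \<le> emp_avg w N (\<lambda>x. 16 * u N ^ 4 * ((b N * x)^4 * min 1 (4 * u N ^ 2 * (b N * x)^2) + c N ^ 4))"
      by (rule emp_avg_mono, rule ln_cosh_remainder_scaled_le)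
    also have "\<dots> = emp_avg w N (\<lambda>x. (16 * u N ^ 4 * b N ^ 4) * (x^4 * min 1 (s N * x^2)) + 16 * u N ^ 4 * c N ^ 4)"
      by (simp add: s_def algebra_simps)
    also have "\<dots> = u N ^ 4 * (16 * (b N ^ 4 * T N + c N ^ 4))"
      using N by (simp only: emp_avg_add emp_avg_cmult emp_avg_const T_def) (simp add: algebra_simps)
    finally have R_le: "?R \<le> u N ^ 4 * (16 * (b N ^ 4 * T N + c N ^ 4))" .
    have "0 \<le> T N" unfolding T_def s_def by (intro emp_avg_nonneg) simp
    moreover have "0 \<le> ?R" by (intro emp_avg_nonneg ln_cosh_remainder_nonneg)
    ultimately show "norm (?R / u N ^ 4) \<le> 16 * (b N ^ 4 * T N + c N ^ 4)"
      using R_le by (cases "u N = 0") (auto simp: divide_le_eq mult.commute)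
  qed
qed

lemma scaled_G_N_beta_cN_tendsto:
  assumes law: "real_distribution \<mu>" and conv: "weak_conv_m (emp_law w) \<mu>"
    and int4: "integrable \<mu> (\<lambda>x. x^4)" and mom4: "(\<lambda>N. emp_moment w N 4) \<longlonglongrightarrow> (\<integral>x. x^4 \<partial>\<mu>)"
    and m1: "(\<lambda>N. emp_moment w N 1) \<longlonglongrightarrow> E1" and m2: "(\<lambda>N. emp_moment w N 2) \<longlonglongrightarrow> E2"
    and E1_pos: "E1 > 0" and E2_pos: "E2 > 0"
  shows "(\<lambda>N. real N * G_N w N (beta_cN w N) (3/4) (z / real N powr (1/4)) r)
     \<longlonglongrightarrow> - (z * r * E1 / sqrt E2) + z^4 * (\<integral>x. x^4 \<partial>\<mu>) / (12 * E2^2)"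
proof -
  define a u where "a N = 1 / sqrt (emp_moment w N 2)" and "u N = 1 / real N powr (1/4)" for N
  have u: "u \<longlonglongrightarrow> 0"
    using tendsto_neg_powr[OF _ filterlim_real_sequentially, of "-(1/4)"]
    unfolding u_def by (simp add: powr_minus_divide)
  have "(\<lambda>N. r * u N ^ 2) \<longlonglongrightarrow> r * 0 ^ 2" by (intro tendsto_intros u)
  then have shift: "(\<lambda>N. r * u N ^ 2) \<longlonglongrightarrow> 0" by simp
  have a: "a \<longlonglongrightarrow> 1 / sqrt E2" unfolding a_def using E2_pos by (intro tendsto_intros m2) auto
  have scale: "(\<lambda>N. a N * z) \<longlonglongrightarrow> 1 / sqrt E2 * z" by (intro tendsto_intros a)
  have "\<forall>\<^sub>F N in sequentially. N \<ge> 1 \<and> emp_moment w N 1 > 0 \<and> emp_moment w N 2 > 0"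
    using E1_pos E2_pos by (intro eventually_conj eventually_ge_at_top order_tendstoD(1)[OF m1] order_tendstoD(1)[OF m2])
  then have expansion: "\<forall>\<^sub>F N in sequentially.
      - (a N * z * r * emp_moment w N 1) - r^2 * u N ^ 2 / 2
        + emp_avg w N (\<lambda>x. (a N * z * x + r * u N ^ 2)^4) / 12
        - emp_avg w N (\<lambda>x. ln_cosh_remainder (u N * (a N * z * x + r * u N ^ 2))) / u N ^ 4
      = real N * G_N w N (beta_cN w N) (3/4) (z / real N powr (1/4)) r"
    by eventually_elim (simp add: scaled_G_N_beta_cN_expansion a_def u_def)
  have quartic: "(\<lambda>N. emp_avg w N (\<lambda>x. (a N * z * x + r * u N ^ 2)^4)) \<longlonglongrightarrow> (1 / sqrt E2 * z)^4 * (\<integral>x. x^4 \<partial>\<mu>)"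
    by (rule emp_avg_affine_power4_tendsto[OF scale shift m1 m2 mom4])
  have remainder: "(\<lambda>N. emp_avg w N (\<lambda>x. ln_cosh_remainder (u N * (a N * z * x + r * u N ^ 2))) / u N ^ 4) \<longlonglongrightarrow> 0"
    by (rule emp_avg_ln_cosh_remainder_tendsto_0[OF law conv int4 mom4 u scale shift])
  have "(\<lambda>N. real N * G_N w N (beta_cN w N) (3/4) (z / real N powr (1/4)) r)
      \<longlonglongrightarrow> - (1 / sqrt E2 * z * r * E1) - r^2 * 0^2 / 2 + (1 / sqrt E2 * z)^4 * (\<integral>x. x^4 \<partial>\<mu>) / 12 - 0"
    by (rule Lim_transform_eventually[OF _ expansion]) (intro tendsto_intros a m1 u quartic remainder, simp_all)
  moreover have "(1 / sqrt E2)^4 = 1 / E2^2"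
    using E2_pos by (simp add: power2_eq_square power4_eq_xxxx)
  ultimately show ?thesis by (simp add: power_mult_distrib field_simps)
qed

theorem mainTheorem10:
  fixes w :: "nat \<Rightarrow> nat \<Rightarrow> real" and \<mu> :: "real measure" and z r :: real
  assumes wpos: "\<And>N i. i \<in> {1..N} \<Longrightarrow> w N i > 0"
    and law: "real_distribution \<mu>"
    and conv: "weak_conv_m (emp_law w) \<mu>"
    and int2: "integrable \<mu> (\<lambda>x. x ^ 2)"
    and mom2: "(\<lambda>N. emp_moment w N 2) \<longlonglongrightarrow> (\<integral>x. x ^ 2 \<partial>\<mu>)"
    and mean_pos: "(\<integral>x. x \<partial>\<mu>) > 0"
    and int4: "integrable \<mu> (\<lambda>x. x ^ 4)"
    and mom4: "(\<lambda>N. emp_moment w N 4) \<longlonglongrightarrow> (\<integral>x. x ^ 4 \<partial>\<mu>)"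
  shows "(\<lambda>N. real N * G_N w N (beta_cN w N) (3/4) (z / real N powr (1/4)) r)
     \<longlonglongrightarrow> (- z * r * sqrt ((\<integral>x. x \<partial>\<mu>) / ((\<integral>x. x ^ 2 \<partial>\<mu>) / (\<integral>x. x \<partial>\<mu>)))
          + 1/12 * (\<integral>x. x ^ 4 \<partial>\<mu>) / (\<integral>x. x ^ 2 \<partial>\<mu>)\<^sup>2 * z ^ 4)"
proof -
  define E1 E2 where "E1 = (\<integral>x. x \<partial>\<mu>)" and "E2 = (\<integral>x. x^2 \<partial>\<mu>)"
  have int1: "integrable \<mu> (\<lambda>x. x)" using mean_pos not_integrable_integral_eq by force
  have m1: "(\<lambda>N. emp_moment w N 1) \<longlonglongrightarrow> E1"
    unfolding E1_def by (rule emp_moment_1_tendsto[OF law conv int1 mom2])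
  have m2: "(\<lambda>N. emp_moment w N 2) \<longlonglongrightarrow> E2" using mom2 by (simp add: E2_def)
  have E1_pos: "E1 > 0" using mean_pos by (simp add: E1_def)
  have "E1^2 \<le> E2" using emp_moment_1_square_le by (intro LIMSEQ_le[OF tendsto_power[OF m1] m2]) auto
  with E1_pos have E2_pos: "E2 > 0" by (smt (verit) zero_less_power)
  have "sqrt (E1 / (E2 / E1)) = E1 / sqrt E2"
    using E1_pos E2_pos by (simp add: real_sqrt_divide power2_eq_square)
  then show ?thesis
    using scaled_G_N_beta_cN_tendsto[OF law conv int4 mom4 m1 m2 E1_pos E2_pos, of z r]
    unfolding E1_def[symmetric] E2_def[symmetric] by (simp add: field_simps)
qed

end
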